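(* Let $(\mathcal C,\otimes,I)$ be a closed monoidal category and $M$ a strong monad on $\mathcal C$. For every Eilenberg--Moore $M$-monoid of the shape $\langle MA,\mu_A,m,u\rangle$ (a Kleisli monoid), the morphism $\Lambda(m): MA\to(MA\Rightarrow MA)$ (i) is a morphism of Eilenberg--Moore $M$-monoids $\langle MA,\mu_A,m,u\rangle\to\langle MA\Rightarrow MA,\ \Lambda(p),\ \mathsf{comp},\ \mathsf{ident}\rangle$, and (ii) is a split monomorphism in $\mathcal C$, i.e. there is $r:(MA\Rightarrow MA)\to MA$ with $r\circ\Lambda(m)=\mathrm{id}_{MA}$.
   Context: Closed means each $(-)\otimes B$ has a right adjoint $B\Rightarrow(-)$; $\Lambda:\mathcal C(X\otimes B,C)\cong\mathcal C(X,B\Rightarrow C)$ is currying and $\mathsf{app}:(B\Rightarrow C)\otimes B\to C$ the counit. $\mathsf{comp}=\Lambda(\mathsf{app}\circ(\mathrm{id}\otimes\mathsf{app})\circ\cong): (MA\Rightarrow MA)\otimes(MA\Rightarrow MA)\to(MA\Rightarrow MA)$ (with $\cong$ the associator), $\mathsf{ident}=\Lambda(I\otimes MA\xrightarrow{\cong}MA)$, and $p=\mu_A\circ M\mathsf{app}\circ\tau: M(MA\Rightarrow MA)\otimes MA\to MA$, where $\tau_{X,Y}: MX\otimes Y\to M(X\otimes Y)$ is the strength of $M$. An Eilenberg--Moore $M$-monoid is $\langle E,a,m,u\rangle$ with $\langle E,a\rangle$ an Eilenberg--Moore $M$-algebra, $\langle E,m,u\rangle$ a monoid in $\mathcal C$,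 and $m\circ(a\otimes\mathrm{id}_E)=a\circ Mm\circ\tau_{E,E}$; a morphism of such is a $\mathcal C$-morphism that is both an $M$-algebra morphism and a monoid morphism. *)

theory Defs
  imports Main
begin

text \<open>Objects have type 'o, morphisms type 'm; hom X Y is the set of morphisms X \<rightarrow> Y.
cmp g f is the composite g \<circ> f (for f : X \<rightarrow> Y, g : Y \<rightarrow> Z).
tob / tar: tensor on objects / morphisms; unit: the unit object I;
assoc X Y Z : (X\<otimes>Y)\<otimes>Z \<rightarrow> X\<otimes>(Y\<otimes>Z); lu X : I\<otimes>X \<rightarrow> X; ru X : X\<otimes>I \<rightarrow> X;
ex B C is the internal hom B \<Rightarrow> C, app B C : (B \<Rightarrow> C)\<otimes>B \<rightarrow> C;
mo / ma: the monad on objects / morphisms; eta, mu: unit and multiplication;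
str X Y : M X \<otimes> Y \<rightarrow> M (X\<otimes>Y) the strength.\<close>

record ('o, 'm) smc =
  hom   :: "'o \<Rightarrow> 'o \<Rightarrow> 'm set"
  cmp   :: "'m \<Rightarrow> 'm \<Rightarrow> 'm"
  idm   :: "'o \<Rightarrow> 'm"
  tob   :: "'o \<Rightarrow> 'o \<Rightarrow> 'o"
  tar   :: "'m \<Rightarrow> 'm \<Rightarrow> 'm"
  unit  :: "'o"
  assoc :: "'o \<Rightarrow> 'o \<Rightarrow> 'o \<Rightarrow> 'm"
  lu    :: "'o \<Rightarrow> 'm"
  ru    :: "'o \<Rightarrow> 'm"
  ex    :: "'o \<Rightarrow> 'o \<Rightarrow> 'o"
  app   :: "'o \<Rightarrow> 'o \<Rightarrow> 'm"
  mo    :: "'o \<Rightarrow> 'o"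
  ma    :: "'m \<Rightarrow> 'm"
  eta   :: "'o \<Rightarrow> 'm"
  mu    :: "'o \<Rightarrow> 'm"
  str   :: "'o \<Rightarrow> 'o \<Rightarrow> 'm"

definition is_iso :: "('o,'m) smc \<Rightarrow> 'o \<Rightarrow> 'o \<Rightarrow> 'm \<Rightarrow> bool" where
  "is_iso S X Y f \<longleftrightarrow> f \<in> hom S X Y \<and>
     (\<exists>g \<in> hom S Y X. cmp S g f = idm S X \<and> cmp S f g = idm S Y)"

definition category :: "('o,'m) smc \<Rightarrow> bool" where
  "category S \<longleftrightarrow>
     (\<forall>X. idm S X \<in> hom S X X) \<and>
     (\<forall>X Y Z f g. f \<in> hom S X Y \<longrightarrow> g \<in> hom S Y Z \<longrightarrow> cmp S g f \<in> hom S X Z) \<and>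
     (\<forall>X Y f. f \<in> hom S X Y \<longrightarrow> cmp S (idm S Y) f = f \<and> cmp S f (idm S X) = f) \<and>
     (\<forall>W X Y Z f g h. f \<in> hom S W X \<longrightarrow> g \<in> hom S X Y \<longrightarrow> h \<in> hom S Y Z \<longrightarrow>
        cmp S h (cmp S g f) = cmp S (cmp S h g) f)"

definition monoidal_category :: "('o,'m) smc \<Rightarrow> bool" where
  "monoidal_category S \<longleftrightarrow> category S \<and>
     \<comment> \<open>tensor is a bifunctor\<close>
     (\<forall>X Y X' Y' f g. f \<in> hom S X Y \<longrightarrow> g \<in> hom S X' Y' \<longrightarrow>
        tar S f g \<in> hom S (tob S X X') (tob S Y Y')) \<and>
     (\<forall>X Y. tar S (idm S X) (idm S Y) = idm S (tob S X Y)) \<and>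
     (\<forall>X Y Z X' Y' Z' f g f' g'. f \<in> hom S X Y \<longrightarrow> g \<in> hom S Y Z \<longrightarrow>
        f' \<in> hom S X' Y' \<longrightarrow> g' \<in> hom S Y' Z' \<longrightarrow>
        tar S (cmp S g f) (cmp S g' f') = cmp S (tar S g g') (tar S f f')) \<and>
     \<comment> \<open>associator and unitors: natural isomorphisms\<close>
     (\<forall>X Y Z. is_iso S (tob S (tob S X Y) Z) (tob S X (tob S Y Z)) (assoc S X Y Z)) \<and>
     (\<forall>X. is_iso S (tob S (unit S) X) X (lu S X)) \<and>
     (\<forall>X. is_iso S (tob S X (unit S)) X (ru S X)) \<and>
     (\<forall>X Y Z X' Y' Z' f g h. f \<in> hom S X X' \<longrightarrow> g \<in> hom S Y Y' \<longrightarrow> h \<in> hom S Z Z' \<longrightarrow>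
        cmp S (assoc S X' Y' Z') (tar S (tar S f g) h) =
        cmp S (tar S f (tar S g h)) (assoc S X Y Z)) \<and>
     (\<forall>X Y f. f \<in> hom S X Y \<longrightarrow>
        cmp S f (lu S X) = cmp S (lu S Y) (tar S (idm S (unit S)) f)) \<and>
     (\<forall>X Y f. f \<in> hom S X Y \<longrightarrow>
        cmp S f (ru S X) = cmp S (ru S Y) (tar S f (idm S (unit S)))) \<and>
     \<comment> \<open>pentagon\<close>
     (\<forall>W X Y Z.
        cmp S (assoc S W X (tob S Y Z)) (assoc S (tob S W X) Y Z) =
        cmp S (tar S (idm S W) (assoc S X Y Z))
          (cmp S (assoc S W (tob S X Y) Z) (tar S (assoc S W X Y) (idm S Z)))) \<and>
     \<comment> \<open>triangle\<close>
     (\<forall>X Y. cmp S (tar S (idm S X) (lu S Y)) (assoc S X (unit S) Y) =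
        tar S (ru S X) (idm S Y))"

definition closed_monoidal_category :: "('o,'m) smc \<Rightarrow> bool" where
  "closed_monoidal_category S \<longleftrightarrow> monoidal_category S \<and>
     (\<forall>B C. app S B C \<in> hom S (tob S (ex S B C) B) C) \<and>
     (\<forall>X B C f. f \<in> hom S (tob S X B) C \<longrightarrow>
        (\<exists>!g. g \<in> hom S X (ex S B C) \<and> cmp S (app S B C) (tar S g (idm S B)) = f))"

definition Lam :: "('o,'m) smc \<Rightarrow> 'o \<Rightarrow> 'o \<Rightarrow> 'o \<Rightarrow> 'm \<Rightarrow> 'm" where
  "Lam S X B C f = (THE g. g \<in> hom S X (ex S B C) \<and> cmp S (app S B C) (tar S g (idm S B)) = f)"

definition strong_monad :: "('o,'m) smc \<Rightarrow> bool" where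
  "strong_monad S \<longleftrightarrow>
     \<comment> \<open>M is a functor\<close>
     (\<forall>X Y f. f \<in> hom S X Y \<longrightarrow> ma S f \<in> hom S (mo S X) (mo S Y)) \<and>
     (\<forall>X. ma S (idm S X) = idm S (mo S X)) \<and>
     (\<forall>X Y Z f g. f \<in> hom S X Y \<longrightarrow> g \<in> hom S Y Z \<longrightarrow>
        ma S (cmp S g f) = cmp S (ma S g) (ma S f)) \<and>
     \<comment> \<open>unit and multiplication: natural transformations\<close>
     (\<forall>X. eta S X \<in> hom S X (mo S X)) \<and>
     (\<forall>X. mu S X \<in> hom S (mo S (mo S X)) (mo S X)) \<and>
     (\<forall>X Y f. f \<in> hom S X Y \<longrightarrow> cmp S (eta S Y) f = cmp S (ma S f) (eta S X)) \<and>
     (\<forall>X Y f. f \<in> hom S X Y \<longrightarrow>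
        cmp S (mu S Y) (ma S (ma S f)) = cmp S (ma S f) (mu S X)) \<and>
     \<comment> \<open>monad laws\<close>
     (\<forall>X. cmp S (mu S X) (eta S (mo S X)) = idm S (mo S X)) \<and>
     (\<forall>X. cmp S (mu S X) (ma S (eta S X)) = idm S (mo S X)) \<and>
     (\<forall>X. cmp S (mu S X) (ma S (mu S X)) = cmp S (mu S X) (mu S (mo S X))) \<and>
     \<comment> \<open>strength \<tau>_{X,Y} : M X \<otimes> Y \<rightarrow> M (X \<otimes> Y), natural in X and Y\<close>
     (\<forall>X Y. str S X Y \<in> hom S (tob S (mo S X) Y) (mo S (tob S X Y))) \<and>
     (\<forall>X Y X' Y' f g. f \<in> hom S X X' \<longrightarrow> g \<in> hom S Y Y' \<longrightarrow>
        cmp S (str S X' Y') (tar S (ma S f) g) = cmp S (ma S (tar S f g)) (str S X Y)) \<and>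
     \<comment> \<open>strength coherence with the unitor, associator, unit and multiplication\<close>
     (\<forall>X. cmp S (ma S (ru S X)) (str S X (unit S)) = ru S (mo S X)) \<and>
     (\<forall>X Y Z. cmp S (str S X (tob S Y Z)) (assoc S (mo S X) Y Z) =
        cmp S (ma S (assoc S X Y Z)) (cmp S (str S (tob S X Y) Z) (tar S (str S X Y) (idm S Z)))) \<and>
     (\<forall>X Y. cmp S (str S X Y) (tar S (eta S X) (idm S Y)) = eta S (tob S X Y)) \<and>
     (\<forall>X Y. cmp S (str S X Y) (tar S (mu S X) (idm S Y)) =
        cmp S (mu S (tob S X Y)) (cmp S (ma S (str S X Y)) (str S (mo S X) Y)))"

definition EM_algebra :: "('o,'m) smc \<Rightarrow> 'o \<Rightarrow> 'm \<Rightarrow> bool" where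
  "EM_algebra S E a \<longleftrightarrow> a \<in> hom S (mo S E) E \<and>
     cmp S a (eta S E) = idm S E \<and> cmp S a (ma S a) = cmp S a (mu S E)"

definition monoid_obj :: "('o,'m) smc \<Rightarrow> 'o \<Rightarrow> 'm \<Rightarrow> 'm \<Rightarrow> bool" where
  "monoid_obj S E m u \<longleftrightarrow> m \<in> hom S (tob S E E) E \<and> u \<in> hom S (unit S) E \<and>
     cmp S m (tar S m (idm S E)) = cmp S m (cmp S (tar S (idm S E) m) (assoc S E E E)) \<and>
     cmp S m (tar S u (idm S E)) = lu S E \<and>
     cmp S m (tar S (idm S E) u) = ru S E"

definition EM_monoid :: "('o,'m) smc \<Rightarrow> 'o \<Rightarrow> 'm \<Rightarrow> 'm \<Rightarrow> 'm \<Rightarrow> bool" where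
  "EM_monoid S E a m u \<longleftrightarrow> EM_algebra S E a \<and> monoid_obj S E m u \<and>
     cmp S m (tar S a (idm S E)) = cmp S a (cmp S (ma S m) (str S E E))"

definition EM_monoid_hom :: "('o,'m) smc \<Rightarrow> 'o \<Rightarrow> 'm \<Rightarrow> 'm \<Rightarrow> 'm \<Rightarrow>
     'o \<Rightarrow> 'm \<Rightarrow> 'm \<Rightarrow> 'm \<Rightarrow> 'm \<Rightarrow> bool" where
  "EM_monoid_hom S E a m u E' a' m' u' h \<longleftrightarrow>
     EM_monoid S E a m u \<and> EM_monoid S E' a' m' u' \<and> h \<in> hom S E E' \<and>
     cmp S h a = cmp S a' (ma S h) \<and>
     cmp S h m = cmp S m' (tar S h h) \<and>
     cmp S h u = u'"

definition endo :: "('o,'m) smc \<Rightarrow> 'o \<Rightarrow> 'o" where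
  "endo S A = ex S (mo S A) (mo S A)"

definition comp_endo :: "('o,'m) smc \<Rightarrow> 'o \<Rightarrow> 'm" where
  "comp_endo S A = Lam S (tob S (endo S A) (endo S A)) (mo S A) (mo S A)
     (cmp S (app S (mo S A) (mo S A))
        (cmp S (tar S (idm S (endo S A)) (app S (mo S A) (mo S A)))
           (assoc S (endo S A) (endo S A) (mo S A))))"

definition ident_endo :: "('o,'m) smc \<Rightarrow> 'o \<Rightarrow> 'm" where
  "ident_endo S A = Lam S (unit S) (mo S A) (mo S A) (lu S (mo S A))"

definition p_endo :: "('o,'m) smc \<Rightarrow> 'o \<Rightarrow> 'm" where
  "p_endo S A = cmp S (mu S A) (cmp S (ma S (app S (mo S A) (mo S A))) (str S (endo S A) (mo S A)))"

end

theory Submission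
  imports Defs
begin

text \<open>Two maps into an internal hom \<open>B \<Rightarrow> C\<close> agree as soon as their composites with
  evaluation agree, so every identity below is checked after uncurrying. For any object \<open>B\<close>,
  composition and \<open>\<Lambda>(\<lambda>)\<close> make \<open>B \<Rightarrow> B\<close> a monoid (the left unit law needs Kelly's lemma
  \<open>\<lambda> \<circ> \<alpha> = \<lambda> \<otimes> id\<close>), and for any Eilenberg--Moore algebra \<open>b\<close> on \<open>B\<close> the map
  \<open>\<Lambda>(b \<circ> M app \<circ> \<tau>)\<close> is an algebra structure compatible with composition; this needs only the
  algebra laws of \<open>b\<close> and the coherence of the strength, not the monad laws. For an
  Eilenberg--Moore monoid \<open>\<langle>E, a, m, u\<rangle>\<close>, uncurrying turns the monoid laws of \<open>m\<close> and its
  compatibility with \<open>a\<close> into the statement that \<open>\<Lambda>(m)\<close> is a morphism of Eilenberg--Moore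
  monoids into \<open>E \<Rightarrow> E\<close>, and evaluation at the unit, \<open>\<phi> \<mapsto> \<phi> \<circ> u\<close>, retracts \<open>\<Lambda>(m)\<close> by
  the right unit law. The theorem is the case \<open>E = MA\<close>, \<open>a = \<mu>\<^sub>A\<close>.\<close>

locale closed_monoidal =
  fixes S :: "('o, 'm) smc"
  assumes closed_monoidal_category: "closed_monoidal_category S"
begin

abbreviation tensor_obj (infixl "\<otimes>" 70) where "X \<otimes> Y \<equiv> tob S X Y"
abbreviation tensor_arr (infixl "\<odot>" 70) where "f \<odot> g \<equiv> tar S f g"
abbreviation I where "I \<equiv> unit S"

lemma monoidal_category: "monoidal_category S"
  using closed_monoidal_category by (simp add: closed_monoidal_category_def)

lemma category: "category S"
  using monoidal_category by (simp add: monoidal_category_def)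

lemma idm_hom [simp]: "idm S X \<in> hom S X X"
  using category by (simp add: category_def)

lemma cmp_hom: "f \<in> hom S X Y \<Longrightarrow> g \<in> hom S Y Z \<Longrightarrow> cmp S g f \<in> hom S X Z"
  using category by (simp add: category_def)

lemma cmp_idm:
  "f \<in> hom S X Y \<Longrightarrow> cmp S (idm S Y) f = f"
  "f \<in> hom S X Y \<Longrightarrow> cmp S f (idm S X) = f"
  using category by (simp_all add: category_def)

lemma cmp_assoc:
  "f \<in> hom S W X \<Longrightarrow> g \<in> hom S X Y \<Longrightarrow> h \<in> hom S Y Z \<Longrightarrow>
   cmp S h (cmp S g f) = cmp S (cmp S h g) f"
  using category by (simp add: category_def)

text \<open>The annotation lets the simplifier discharge the typing side conditions of associativity
  and functoriality through \<open>has_dom\<close> and \<open>has_cod\<close>.\<close>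

definition cmp_at :: "'o \<Rightarrow> 'm \<Rightarrow> 'm \<Rightarrow> 'm" where
  "cmp_at Y g f = cmp S g f"

definition has_cod :: "'m \<Rightarrow> 'o \<Rightarrow> bool" where
  "has_cod f Y \<longleftrightarrow> (\<exists>X. f \<in> hom S X Y)"

definition has_dom :: "'m \<Rightarrow> 'o \<Rightarrow> bool" where
  "has_dom f X \<longleftrightarrow> (\<exists>Y. f \<in> hom S X Y)"

lemma hom_has_cod [simp]: "f \<in> hom S X Y \<Longrightarrow> has_cod f Y"
  unfolding has_cod_def by blast

lemma hom_has_dom [simp]: "f \<in> hom S X Y \<Longrightarrow> has_dom f X"
  unfolding has_dom_def by blast

lemma cmp_at_hom [simp]: "f \<in> hom S X Y \<Longrightarrow> g \<in> hom S Y Z \<Longrightarrow> cmp_at Y g f \<in> hom S X Z"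
  unfolding cmp_at_def by (rule cmp_hom)

lemma has_cod_cmp_at [simp]: "has_cod f Y \<Longrightarrow> g \<in> hom S Y Z \<Longrightarrow> has_cod (cmp_at Y g f) Z"
  unfolding has_cod_def by (meson cmp_at_hom)

lemma has_dom_cmp_at [simp]: "f \<in> hom S X Y \<Longrightarrow> has_dom g Y \<Longrightarrow> has_dom (cmp_at Y g f) X"
  unfolding has_dom_def by (meson cmp_at_hom)

lemmas idm_dom_cod [simp] = hom_has_dom[OF idm_hom] hom_has_cod[OF idm_hom]

lemma cmp_at_assoc [simp]:
  "has_cod f X \<Longrightarrow> g \<in> hom S X Y \<Longrightarrow> has_dom h Y \<Longrightarrow>
   cmp_at X (cmp_at Y h g) f = cmp_at Y h (cmp_at X g f)"
  unfolding has_cod_def has_dom_def cmp_at_def by (metis cmp_assoc)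

lemma cmp_at_idm_left [simp]: "has_cod f X \<Longrightarrow> cmp_at X (idm S X) f = f"
  unfolding has_cod_def cmp_at_def by (metis cmp_idm(1))

lemma cmp_at_idm_right [simp]: "has_dom f X \<Longrightarrow> cmp_at X f (idm S X) = f"
  unfolding has_dom_def cmp_at_def by (metis cmp_idm(2))

lemma cmp_at_assoc_eq:
  "cmp_at Y g f = h \<Longrightarrow> f \<in> hom S X Y \<Longrightarrow> has_dom g Y \<Longrightarrow> has_cod k X \<Longrightarrow>
   cmp_at Y g (cmp_at X f k) = cmp_at X h k"
  by (metis cmp_at_assoc hom_has_dom)

lemma cmp_at_assoc_eq2:
  "cmp_at Y g f = cmp_at Y' g' f' \<Longrightarrow> f \<in> hom S X Y \<Longrightarrow> f' \<in> hom S X Y' \<Longrightarrow>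
   has_dom g Y \<Longrightarrow> has_dom g' Y' \<Longrightarrow> has_cod k X \<Longrightarrow>
   cmp_at Y g (cmp_at X f k) = cmp_at Y' g' (cmp_at X f' k)"
  by (metis cmp_at_assoc)

lemma tar_hom [simp]:
  "f \<in> hom S X Y \<Longrightarrow> g \<in> hom S X' Y' \<Longrightarrow> f \<odot> g \<in> hom S (X \<otimes> X') (Y \<otimes> Y')"
  using monoidal_category by (simp add: monoidal_category_def)

lemma has_cod_tar [simp]: "has_cod f Y \<Longrightarrow> has_cod g Y' \<Longrightarrow> has_cod (f \<odot> g) (Y \<otimes> Y')"
  unfolding has_cod_def by (meson tar_hom)

lemma has_dom_tar [simp]: "has_dom f X \<Longrightarrow> has_dom g X' \<Longrightarrow> has_dom (f \<odot> g) (X \<otimes> X')"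
  unfolding has_dom_def by (meson tar_hom)

lemma tar_idm [simp]: "idm S X \<odot> idm S Y = idm S (X \<otimes> Y)"
  using monoidal_category by (simp add: monoidal_category_def)

lemma tar_cmp:
  "f \<in> hom S X Y \<Longrightarrow> g \<in> hom S Y Z \<Longrightarrow> f' \<in> hom S X' Y' \<Longrightarrow> g' \<in> hom S Y' Z' \<Longrightarrow>
   cmp S g f \<odot> cmp S g' f' = cmp S (g \<odot> g') (f \<odot> f')"
  using monoidal_category by (simp add: monoidal_category_def)

lemma tar_cmp_at [simp]:
  "has_cod f Y \<Longrightarrow> has_dom g Y \<Longrightarrow> has_cod f' Y' \<Longrightarrow> has_dom g' Y' \<Longrightarrow>
   cmp_at (Y \<otimes> Y') (g \<odot> g') (f \<odot> f') = cmp_at Y g f \<odot> cmp_at Y' g' f'"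
  unfolding has_cod_def has_dom_def cmp_at_def by (metis tar_cmp)

lemma tar_cmp_at_assoc [simp]:
  "has_cod k X \<Longrightarrow> f \<odot> f' \<in> hom S X (Y \<otimes> Y') \<Longrightarrow> has_dom g Y \<Longrightarrow> has_dom g' Y' \<Longrightarrow>
   has_cod f Y \<Longrightarrow> has_cod f' Y' \<Longrightarrow>
   cmp_at (Y \<otimes> Y') (g \<odot> g') (cmp_at X (f \<odot> f') k) = cmp_at X (cmp_at Y g f \<odot> cmp_at Y' g' f') k"
  by (rule cmp_at_assoc_eq) simp_all

lemma assoc_iso: "is_iso S ((X \<otimes> Y) \<otimes> Z) (X \<otimes> (Y \<otimes> Z)) (assoc S X Y Z)"
  using monoidal_category by (simp add: monoidal_category_def)

lemma lu_iso: "is_iso S (I \<otimes> X) X (lu S X)"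
  using monoidal_category by (simp add: monoidal_category_def)

lemma ru_iso: "is_iso S (X \<otimes> I) X (ru S X)"
  using monoidal_category by (simp add: monoidal_category_def)

lemma iso_hom: "is_iso S X Y f \<Longrightarrow> f \<in> hom S X Y"
  unfolding is_iso_def by blast

lemma assoc_hom [simp]: "assoc S X Y Z \<in> hom S ((X \<otimes> Y) \<otimes> Z) (X \<otimes> (Y \<otimes> Z))"
  by (rule iso_hom[OF assoc_iso])

lemma lu_hom [simp]: "lu S X \<in> hom S (I \<otimes> X) X"
  by (rule iso_hom[OF lu_iso])

lemma ru_hom [simp]: "ru S X \<in> hom S (X \<otimes> I) X"
  by (rule iso_hom[OF ru_iso])

lemmas assoc_dom_cod [simp] = hom_has_dom[OF assoc_hom] hom_has_cod[OF assoc_hom]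
lemmas lu_dom_cod [simp] = hom_has_dom[OF lu_hom] hom_has_cod[OF lu_hom]
lemmas ru_dom_cod [simp] = hom_has_dom[OF ru_hom] hom_has_cod[OF ru_hom]

lemma assoc_natural:
  "f \<in> hom S X X' \<Longrightarrow> g \<in> hom S Y Y' \<Longrightarrow> h \<in> hom S Z Z' \<Longrightarrow>
   cmp_at ((X' \<otimes> Y') \<otimes> Z') (assoc S X' Y' Z') ((f \<odot> g) \<odot> h) =
   cmp_at (X \<otimes> (Y \<otimes> Z)) (f \<odot> (g \<odot> h)) (assoc S X Y Z)"
  using monoidal_category by (simp add: monoidal_category_def cmp_at_def)

lemma lu_natural:
  "f \<in> hom S X Y \<Longrightarrow> cmp_at (I \<otimes> Y) (lu S Y) (idm S I \<odot> f) = cmp_at X f (lu S X)"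
  using monoidal_category by (simp add: monoidal_category_def cmp_at_def)

lemma ru_natural:
  "f \<in> hom S X Y \<Longrightarrow> cmp_at (Y \<otimes> I) (ru S Y) (f \<odot> idm S I) = cmp_at X f (ru S X)"
  using monoidal_category by (simp add: monoidal_category_def cmp_at_def)

lemma pentagon:
  "cmp_at ((W \<otimes> X) \<otimes> (Y \<otimes> Z)) (assoc S W X (Y \<otimes> Z)) (assoc S (W \<otimes> X) Y Z) =
   cmp_at (W \<otimes> ((X \<otimes> Y) \<otimes> Z)) (idm S W \<odot> assoc S X Y Z)
     (cmp_at ((W \<otimes> (X \<otimes> Y)) \<otimes> Z) (assoc S W (X \<otimes> Y) Z) (assoc S W X Y \<odot> idm S Z))"
  using monoidal_category by (simp add: monoidal_category_def cmp_at_def)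

lemma triangle:
  "cmp_at (X \<otimes> (I \<otimes> Y)) (idm S X \<odot> lu S Y) (assoc S X I Y) = ru S X \<odot> idm S Y"
  using monoidal_category by (simp add: monoidal_category_def cmp_at_def)

lemma iso_cancel_right:
  assumes iso: "is_iso S X Y f" and "g \<in> hom S Y Z" "h \<in> hom S Y Z"
    and eq: "cmp_at Y g f = cmp_at Y h f"
  shows "g = h"
proof -
  from iso obtain f' where f': "f' \<in> hom S Y X" "cmp S f f' = idm S Y" "f \<in> hom S X Y"
    unfolding is_iso_def by blast
  have "g = cmp S (cmp S g f) f'"
    using f' \<open>g \<in> hom S Y Z\<close> by (metis cmp_assoc cmp_idm(2))
  also have "\<dots> = cmp S (cmp S h f) f'"
    using eq by (simp add: cmp_at_def)
  also have "\<dots> = h"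
    using f' \<open>h \<in> hom S Y Z\<close> by (metis cmp_assoc cmp_idm(2))
  finally show ?thesis .
qed

lemma is_iso_tar_idm:
  assumes "is_iso S X Y f"
  shows "is_iso S (X \<otimes> Z) (Y \<otimes> Z) (f \<odot> idm S Z)"
proof -
  from assms obtain f' where f': "f \<in> hom S X Y" "f' \<in> hom S Y X"
    "cmp S f' f = idm S X" "cmp S f f' = idm S Y"
    unfolding is_iso_def by blast
  have "cmp S (f' \<odot> idm S Z) (f \<odot> idm S Z) = idm S (X \<otimes> Z)"
    using f' tar_cmp[of f X Y f' X "idm S Z" Z Z "idm S Z" Z] by (simp add: cmp_idm(1)[OF idm_hom])
  moreover have "cmp S (f \<odot> idm S Z) (f' \<odot> idm S Z) = idm S (Y \<otimes> Z)"
    using f' tar_cmp[of f' Y X f Y "idm S Z" Z Z "idm S Z" Z] by (simp add: cmp_idm(1)[OF idm_hom])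
  ultimately show ?thesis
    using f' unfolding is_iso_def by (metis tar_hom idm_hom)
qed

text \<open>Kelly's lemma, derived from the pentagon and the triangle by cancelling
  the isomorphisms \<open>\<alpha> \<odot> id\<close>, \<open>\<alpha>\<close> and \<open>\<lambda>\<close>.\<close>

lemma lu_tensor_assoc:
  "cmp_at (I \<otimes> (Y \<otimes> Z)) (lu S (Y \<otimes> Z)) (assoc S I Y Z) = lu S Y \<odot> idm S Z"
proof -
  let ?g = "cmp_at (I \<otimes> (Y \<otimes> Z)) (lu S (Y \<otimes> Z)) (assoc S I Y Z)"
  let ?f = "lu S Y \<odot> idm S Z"
  let ?a1 = "assoc S I (I \<otimes> Y) Z"
  let ?a2 = "assoc S I I Y \<odot> idm S Z"
  let ?rhs = "cmp_at (I \<otimes> (I \<otimes> (Y \<otimes> Z))) (idm S I \<odot> lu S (Y \<otimes> Z))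
    (cmp_at ((I \<otimes> I) \<otimes> (Y \<otimes> Z)) (assoc S I I (Y \<otimes> Z)) (assoc S (I \<otimes> I) Y Z))"
  have g_side: "cmp_at (I \<otimes> ((I \<otimes> Y) \<otimes> Z)) (idm S I \<odot> ?g)
      (cmp_at ((I \<otimes> (I \<otimes> Y)) \<otimes> Z) ?a1 ?a2) = ?rhs"
    by (simp add: pentagon)
  have nat1: "cmp_at (I \<otimes> ((I \<otimes> Y) \<otimes> Z)) (idm S I \<odot> ?f) ?a1 =
      cmp_at ((I \<otimes> Y) \<otimes> Z) (assoc S I Y Z) ((idm S I \<odot> lu S Y) \<odot> idm S Z)"
    by (rule assoc_natural[symmetric]) simp_all
  have nat2: "cmp_at ((I \<otimes> Y) \<otimes> Z) (assoc S I Y Z) ((ru S I \<odot> idm S Y) \<odot> idm S Z) =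
      cmp_at ((I \<otimes> I) \<otimes> (Y \<otimes> Z)) (ru S I \<odot> idm S (Y \<otimes> Z)) (assoc S (I \<otimes> I) Y Z)"
    using assoc_natural[of "ru S I" "I \<otimes> I" I "idm S Y" Y Y "idm S Z" Z Z] by simp
  have f_side: "cmp_at (I \<otimes> ((I \<otimes> Y) \<otimes> Z)) (idm S I \<odot> ?f)
      (cmp_at ((I \<otimes> (I \<otimes> Y)) \<otimes> Z) ?a1 ?a2) = ?rhs"
    by (simp add: nat1 cmp_at_assoc_eq2[OF nat1] triangle cmp_at_assoc_eq[OF triangle] nat2)
  have "cmp_at ((I \<otimes> (I \<otimes> Y)) \<otimes> Z) (cmp_at (I \<otimes> ((I \<otimes> Y) \<otimes> Z)) (idm S I \<odot> ?g) ?a1) ?a2 =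
      cmp_at ((I \<otimes> (I \<otimes> Y)) \<otimes> Z) (cmp_at (I \<otimes> ((I \<otimes> Y) \<otimes> Z)) (idm S I \<odot> ?f) ?a1) ?a2"
    using g_side f_side by simp
  then have "cmp_at (I \<otimes> ((I \<otimes> Y) \<otimes> Z)) (idm S I \<odot> ?g) ?a1 =
      cmp_at (I \<otimes> ((I \<otimes> Y) \<otimes> Z)) (idm S I \<odot> ?f) ?a1"
    by (rule iso_cancel_right[where Z="I \<otimes> (Y \<otimes> Z)", OF is_iso_tar_idm[OF assoc_iso], rotated 2])
      simp_all
  then have "idm S I \<odot> ?g = idm S I \<odot> ?f"
    by (rule iso_cancel_right[where Z="I \<otimes> (Y \<otimes> Z)", OF assoc_iso, rotated 2]) simp_all
  then have "cmp_at ((I \<otimes> Y) \<otimes> Z) ?g (lu S ((I \<otimes> Y) \<otimes> Z)) =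
      cmp_at ((I \<otimes> Y) \<otimes> Z) ?f (lu S ((I \<otimes> Y) \<otimes> Z))"
    using lu_natural[of ?g "(I \<otimes> Y) \<otimes> Z" "Y \<otimes> Z"] lu_natural[of ?f "(I \<otimes> Y) \<otimes> Z" "Y \<otimes> Z"] by simp
  then show ?thesis
    by (rule iso_cancel_right[where Z="Y \<otimes> Z", OF lu_iso, rotated 2]) simp_all
qed

lemma app_hom [simp]: "app S B C \<in> hom S (ex S B C \<otimes> B) C"
  using closed_monoidal_category by (simp add: closed_monoidal_category_def)

lemmas app_dom_cod [simp] = hom_has_dom[OF app_hom] hom_has_cod[OF app_hom]

lemma Lam_universal:
  assumes "f \<in> hom S (X \<otimes> B) C"
  shows "Lam S X B C f \<in> hom S X (ex S B C)"
    and "cmp_at (ex S B C \<otimes> B) (app S B C) (Lam S X B C f \<odot> idm S B) = f"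
proof -
  have "\<exists>!g. g \<in> hom S X (ex S B C) \<and> cmp S (app S B C) (g \<odot> idm S B) = f"
    using closed_monoidal_category assms by (simp add: closed_monoidal_category_def)
  then have "Lam S X B C f \<in> hom S X (ex S B C) \<and>
      cmp S (app S B C) (Lam S X B C f \<odot> idm S B) = f"
    unfolding Lam_def by (rule theI')
  then show "Lam S X B C f \<in> hom S X (ex S B C)"
    and "cmp_at (ex S B C \<otimes> B) (app S B C) (Lam S X B C f \<odot> idm S B) = f"
    by (simp_all add: cmp_at_def)
qed

lemmas Lam_hom [simp] = Lam_universal(1)
lemmas app_Lam = Lam_universal(2)

lemmas Lam_dom_cod [simp] = hom_has_dom[OF Lam_hom] hom_has_cod[OF Lam_hom]

lemma Lam_unique:
  assumes g: "g \<in> hom S X (ex S B C)"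
    and eq: "cmp_at (ex S B C \<otimes> B) (app S B C) (g \<odot> idm S B) = f"
  shows "Lam S X B C f = g"
proof -
  have f: "f \<in> hom S (X \<otimes> B) C"
    using eq g by (metis cmp_at_hom tar_hom idm_hom app_hom)
  then have "\<exists>!g. g \<in> hom S X (ex S B C) \<and> cmp S (app S B C) (g \<odot> idm S B) = f"
    using closed_monoidal_category by (simp add: closed_monoidal_category_def)
  then show ?thesis
    using Lam_universal[OF f] g eq unfolding cmp_at_def by blast
qed

lemma hom_ex_eqI:
  "g \<in> hom S X (ex S B C) \<Longrightarrow> g' \<in> hom S X (ex S B C) \<Longrightarrow>
   cmp_at (ex S B C \<otimes> B) (app S B C) (g \<odot> idm S B) =
   cmp_at (ex S B C \<otimes> B) (app S B C) (g' \<odot> idm S B) \<Longrightarrow> g = g'"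
  by (metis Lam_unique)

lemma app_Lam_tar [simp]:
  assumes f: "f \<in> hom S (Y \<otimes> B) C" and k: "has_cod k B"
  shows "cmp_at (ex S B C \<otimes> B) (app S B C) (Lam S Y B C f \<odot> k) = cmp_at (Y \<otimes> B) f (idm S Y \<odot> k)"
proof -
  have "Lam S Y B C f \<odot> k = cmp_at (Y \<otimes> B) (Lam S Y B C f \<odot> idm S B) (idm S Y \<odot> k)"
    using f k by simp
  moreover have "cmp_at (ex S B C \<otimes> B) (app S B C)
      (cmp_at (Y \<otimes> B) (Lam S Y B C f \<odot> idm S B) (idm S Y \<odot> k)) = cmp_at (Y \<otimes> B) f (idm S Y \<odot> k)"
    by (rule cmp_at_assoc_eq[OF app_Lam[OF f]]) (use f k in simp_all)
  ultimately show ?thesis by simp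
qed

lemma app_cmp_Lam_tar [simp]:
  assumes f: "f \<in> hom S (Y \<otimes> B) C" and h: "has_cod h Y" and k: "has_cod k B"
  shows "cmp_at (ex S B C \<otimes> B) (app S B C) (cmp_at Y (Lam S Y B C f) h \<odot> k) =
    cmp_at (Y \<otimes> B) f (h \<odot> k)"
proof -
  have "cmp_at Y (Lam S Y B C f) h \<odot> k = cmp_at (Y \<otimes> B) (Lam S Y B C f \<odot> idm S B) (h \<odot> k)"
    using f h k by simp
  moreover have "cmp_at (ex S B C \<otimes> B) (app S B C)
      (cmp_at (Y \<otimes> B) (Lam S Y B C f \<odot> idm S B) (h \<odot> k)) = cmp_at (Y \<otimes> B) f (h \<odot> k)"
    by (rule cmp_at_assoc_eq[OF app_Lam[OF f]]) (use f h k in simp_all)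
  ultimately show ?thesis by simp
qed

lemma app_Lam_tar_assoc [simp]:
  "f \<in> hom S (Y \<otimes> B) C \<Longrightarrow> k \<in> hom S Z B \<Longrightarrow> has_cod q (Y \<otimes> Z) \<Longrightarrow>
   cmp_at (ex S B C \<otimes> B) (app S B C) (cmp_at (Y \<otimes> Z) (Lam S Y B C f \<odot> k) q) =
   cmp_at (Y \<otimes> B) f (cmp_at (Y \<otimes> Z) (idm S Y \<odot> k) q)"
  by (rule cmp_at_assoc_eq2) simp_all

abbreviation End :: "'o \<Rightarrow> 'o" where
  "End B \<equiv> ex S B B"

definition endo_comp :: "'o \<Rightarrow> 'm" where
  "endo_comp B = Lam S (End B \<otimes> End B) B B
     (cmp_at (End B \<otimes> B) (app S B B)
       (cmp_at (End B \<otimes> (End B \<otimes> B)) (idm S (End B) \<odot> app S B B) (assoc S (End B) (End B) B)))"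

definition endo_ident :: "'o \<Rightarrow> 'm" where
  "endo_ident B = Lam S I B B (lu S B)"

lemma endo_comp_hom [simp]: "endo_comp B \<in> hom S (End B \<otimes> End B) (End B)"
  by (simp add: endo_comp_def)

lemma endo_ident_hom [simp]: "endo_ident B \<in> hom S I (End B)"
  by (simp add: endo_ident_def)

lemmas endo_comp_dom_cod [simp] = hom_has_dom[OF endo_comp_hom] hom_has_cod[OF endo_comp_hom]
lemmas endo_ident_dom_cod [simp] = hom_has_dom[OF endo_ident_hom] hom_has_cod[OF endo_ident_hom]

lemma comp_endo_eq: "comp_endo S A = endo_comp (mo S A)"
  by (simp add: comp_endo_def endo_comp_def endo_def cmp_at_def)

lemma ident_endo_eq: "ident_endo S A = endo_ident (mo S A)"
  by (simp add: ident_endo_def endo_ident_def)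

lemma endo_comp_assoc:
  "cmp_at (End B \<otimes> End B) (endo_comp B) (endo_comp B \<odot> idm S (End B)) =
   cmp_at (End B \<otimes> End B) (endo_comp B)
     (cmp_at (End B \<otimes> (End B \<otimes> End B)) (idm S (End B) \<odot> endo_comp B)
       (assoc S (End B) (End B) (End B)))"
  (is "?lhs = ?rhs")
proof (rule hom_ex_eqI[where X="(End B \<otimes> End B) \<otimes> End B"])
  let ?N = "End B" and ?C = "endo_comp B" and ?ev = "app S B B"
  have assoc_C: "cmp_at ((?N \<otimes> ?N) \<otimes> B) (assoc S ?N ?N B) ((?C \<odot> idm S ?N) \<odot> idm S B) =
      cmp_at ((?N \<otimes> ?N) \<otimes> (?N \<otimes> B)) (?C \<odot> idm S (?N \<otimes> B)) (assoc S (?N \<otimes> ?N) ?N B)"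
    using assoc_natural[of ?C "?N \<otimes> ?N" ?N "idm S ?N" ?N ?N "idm S B" B B] by simp
  have assoc_ev: "cmp_at ((?N \<otimes> ?N) \<otimes> B) (assoc S ?N ?N B) (idm S (?N \<otimes> ?N) \<odot> ?ev) =
      cmp_at (?N \<otimes> (?N \<otimes> (?N \<otimes> B))) (idm S ?N \<odot> (idm S ?N \<odot> ?ev)) (assoc S ?N ?N (?N \<otimes> B))"
    using assoc_natural[of "idm S ?N" ?N ?N "idm S ?N" ?N ?N ?ev "?N \<otimes> B" B] by simp
  have assoc_idm_C: "cmp_at ((?N \<otimes> ?N) \<otimes> B) (assoc S ?N ?N B)
        (cmp_at (?N \<otimes> (?N \<otimes> ?N)) (idm S ?N \<odot> ?C) (assoc S ?N ?N ?N) \<odot> idm S B) =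
      cmp_at (?N \<otimes> ((?N \<otimes> ?N) \<otimes> B)) (idm S ?N \<odot> (?C \<odot> idm S B))
        (cmp_at ((?N \<otimes> (?N \<otimes> ?N)) \<otimes> B) (assoc S ?N (?N \<otimes> ?N) B) (assoc S ?N ?N ?N \<odot> idm S B))"
  proof -
    have "cmp_at ((?N \<otimes> ?N) \<otimes> B) (assoc S ?N ?N B) ((idm S ?N \<odot> ?C) \<odot> idm S B) =
        cmp_at (?N \<otimes> ((?N \<otimes> ?N) \<otimes> B)) (idm S ?N \<odot> (?C \<odot> idm S B)) (assoc S ?N (?N \<otimes> ?N) B)"
      by (rule assoc_natural) simp_all
    moreover have "cmp_at (?N \<otimes> (?N \<otimes> ?N)) (idm S ?N \<odot> ?C) (assoc S ?N ?N ?N) \<odot> idm S B =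
        cmp_at ((?N \<otimes> (?N \<otimes> ?N)) \<otimes> B) ((idm S ?N \<odot> ?C) \<odot> idm S B) (assoc S ?N ?N ?N \<odot> idm S B)"
      by simp
    ultimately show ?thesis
      by (simp only:) (rule cmp_at_assoc_eq2; simp)
  qed
  show "cmp_at (?N \<otimes> B) ?ev (?lhs \<odot> idm S B) = cmp_at (?N \<otimes> B) ?ev (?rhs \<odot> idm S B)"
    by (simp add: endo_comp_def assoc_C[unfolded endo_comp_def] assoc_ev
        cmp_at_assoc_eq2[OF assoc_ev] pentagon assoc_idm_C[unfolded endo_comp_def])
qed simp_all

lemma endo_comp_ident_left:
  "cmp_at (End B \<otimes> End B) (endo_comp B) (endo_ident B \<odot> idm S (End B)) = lu S (End B)"
  (is "?lhs = _")
proof (rule hom_ex_eqI[where X="I \<otimes> End B"])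
  let ?N = "End B" and ?ev = "app S B B"
  have assoc_U: "cmp_at ((?N \<otimes> ?N) \<otimes> B) (assoc S ?N ?N B) ((endo_ident B \<odot> idm S ?N) \<odot> idm S B) =
      cmp_at (I \<otimes> (?N \<otimes> B)) (endo_ident B \<odot> idm S (?N \<otimes> B)) (assoc S I ?N B)"
    using assoc_natural[of "endo_ident B" I ?N "idm S ?N" ?N ?N "idm S B" B B] by simp
  have lu_ev: "cmp_at (I \<otimes> B) (lu S B) (idm S I \<odot> ?ev) = cmp_at (?N \<otimes> B) ?ev (lu S (?N \<otimes> B))"
    by (rule lu_natural) simp
  show "cmp_at (?N \<otimes> B) ?ev (?lhs \<odot> idm S B) = cmp_at (?N \<otimes> B) ?ev (lu S ?N \<odot> idm S B)"
    by (simp add: endo_comp_def endo_ident_def assoc_U[unfolded endo_ident_def endo_comp_def]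
        lu_ev cmp_at_assoc_eq2[OF lu_ev] lu_tensor_assoc)
qed simp_all

lemma endo_comp_ident_right:
  "cmp_at (End B \<otimes> End B) (endo_comp B) (idm S (End B) \<odot> endo_ident B) = ru S (End B)"
  (is "?lhs = _")
proof (rule hom_ex_eqI[where X="End B \<otimes> I"])
  let ?N = "End B" and ?ev = "app S B B"
  have assoc_U: "cmp_at ((?N \<otimes> ?N) \<otimes> B) (assoc S ?N ?N B) ((idm S ?N \<odot> endo_ident B) \<odot> idm S B) =
      cmp_at (?N \<otimes> (I \<otimes> B)) (idm S ?N \<odot> (endo_ident B \<odot> idm S B)) (assoc S ?N I B)"
    by (rule assoc_natural) simp_all
  show "cmp_at (?N \<otimes> B) ?ev (?lhs \<odot> idm S B) = cmp_at (?N \<otimes> B) ?ev (ru S ?N \<odot> idm S B)"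
    by (simp add: endo_comp_def endo_ident_def assoc_U[unfolded endo_ident_def endo_comp_def]
        triangle)
qed simp_all

lemma monoid_obj_endo: "monoid_obj S (End B) (endo_comp B) (endo_ident B)"
  using endo_comp_assoc endo_comp_ident_left endo_comp_ident_right
  by (simp add: monoid_obj_def cmp_at_def)

definition ru_inv :: "'o \<Rightarrow> 'm" where
  "ru_inv X = (SOME g. g \<in> hom S X (X \<otimes> I) \<and>
     cmp S (ru S X) g = idm S X \<and> cmp S g (ru S X) = idm S (X \<otimes> I))"

lemma ru_inv [simp]:
  "ru_inv X \<in> hom S X (X \<otimes> I)"
  "cmp_at (X \<otimes> I) (ru S X) (ru_inv X) = idm S X"
  "cmp_at X (ru_inv X) (ru S X) = idm S (X \<otimes> I)"
proof -
  have "\<exists>g. g \<in> hom S X (X \<otimes> I) \<and> cmp S (ru S X) g = idm S X \<and> cmp S g (ru S X) = idm S (X \<otimes> I)"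
    using ru_iso unfolding is_iso_def by blast
  then have "ru_inv X \<in> hom S X (X \<otimes> I) \<and>
      cmp S (ru S X) (ru_inv X) = idm S X \<and> cmp S (ru_inv X) (ru S X) = idm S (X \<otimes> I)"
    unfolding ru_inv_def by (rule someI_ex)
  then show "ru_inv X \<in> hom S X (X \<otimes> I)"
    "cmp_at (X \<otimes> I) (ru S X) (ru_inv X) = idm S X"
    "cmp_at X (ru_inv X) (ru S X) = idm S (X \<otimes> I)"
    by (simp_all add: cmp_at_def)
qed

lemmas ru_inv_dom_cod [simp] = hom_has_dom[OF ru_inv(1)] hom_has_cod[OF ru_inv(1)]

lemma ru_inv_natural:
  assumes f: "f \<in> hom S X Y"
  shows "cmp_at Y (ru_inv Y) f = cmp_at (X \<otimes> I) (f \<odot> idm S I) (ru_inv X)"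
proof -
  have ru_f: "cmp_at X f (ru S X) = cmp_at (Y \<otimes> I) (ru S Y) (f \<odot> idm S I)"
    using ru_natural[OF f] by simp
  have "cmp_at X (cmp_at Y (ru_inv Y) f) (ru S X) =
      cmp_at X (cmp_at (X \<otimes> I) (f \<odot> idm S I) (ru_inv X)) (ru S X)"
    using f by (simp add: ru_f cmp_at_assoc_eq[OF ru_f] cmp_at_assoc_eq[OF ru_inv(3)]
        cmp_at_assoc_eq[OF ru_inv(2)])
  then show ?thesis
    by (rule iso_cancel_right[where Z="Y \<otimes> I", OF ru_iso, rotated 2]) (use f in simp_all)
qed

end

locale internal_monoid = closed_monoidal S for S :: "('o, 'm) smc" +
  fixes E :: 'o and m u :: 'm
  assumes monoid_obj: "monoid_obj S E m u"
begin

lemma mult_hom [simp]: "m \<in> hom S (E \<otimes> E) E"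
  and unit_hom [simp]: "u \<in> hom S I E"
  using monoid_obj by (simp_all add: monoid_obj_def)

lemmas mult_dom_cod [simp] = hom_has_dom[OF mult_hom] hom_has_cod[OF mult_hom]
lemmas unit_dom_cod [simp] = hom_has_dom[OF unit_hom] hom_has_cod[OF unit_hom]

lemma mult_assoc:
  "cmp_at (E \<otimes> E) m (m \<odot> idm S E) =
   cmp_at (E \<otimes> E) m (cmp_at (E \<otimes> (E \<otimes> E)) (idm S E \<odot> m) (assoc S E E E))"
  using monoid_obj by (simp add: monoid_obj_def cmp_at_def)

lemma mult_unit_left: "cmp_at (E \<otimes> E) m (u \<odot> idm S E) = lu S E"
  using monoid_obj by (simp add: monoid_obj_def cmp_at_def)

lemma mult_unit_right: "cmp_at (E \<otimes> E) m (idm S E \<odot> u) = ru S E"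
  using monoid_obj by (simp add: monoid_obj_def cmp_at_def)

abbreviation curry_mult :: 'm where
  "curry_mult \<equiv> Lam S E E E m"

lemma curry_mult_hom: "curry_mult \<in> hom S E (End E)"
  by simp

lemma curry_mult_unit: "cmp_at E curry_mult u = endo_ident E"
  unfolding endo_ident_def
  by (rule hom_ex_eqI[where X=I and B=E and C=E]) (simp_all add: mult_unit_left)

lemma curry_mult_mult:
  "cmp_at E curry_mult m = cmp_at (End E \<otimes> End E) (endo_comp E) (curry_mult \<odot> curry_mult)"
  (is "?lhs = ?rhs")
proof (rule hom_ex_eqI[where X="E \<otimes> E"])
  have assoc_L: "cmp_at ((End E \<otimes> End E) \<otimes> E) (assoc S (End E) (End E) E)
        ((curry_mult \<odot> curry_mult) \<odot> idm S E) =
      cmp_at (E \<otimes> (E \<otimes> E)) (curry_mult \<odot> (curry_mult \<odot> idm S E)) (assoc S E E E)"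
    by (rule assoc_natural) simp_all
  show "cmp_at (End E \<otimes> E) (app S E E) (?lhs \<odot> idm S E) =
      cmp_at (End E \<otimes> E) (app S E E) (?rhs \<odot> idm S E)"
    by (simp add: endo_comp_def assoc_L mult_assoc)
qed simp_all

lemma curry_mult_split_mono: "\<exists>r \<in> hom S (End E) E. cmp S r curry_mult = idm S E"
proof
  let ?N = "End E"
  let ?r = "cmp_at (?N \<otimes> E) (app S E E) (cmp_at (?N \<otimes> I) (idm S ?N \<odot> u) (ru_inv ?N))"
  have "cmp_at ?N ?r curry_mult = idm S E"
    by (simp add: ru_inv_natural[OF curry_mult_hom] cmp_at_assoc_eq[OF mult_unit_right])
  then show "cmp S ?r curry_mult = idm S E"
    by (simp only: cmp_at_def)
  show "?r \<in> hom S ?N E"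
    by simp
qed

end

locale closed_strong_monad = closed_monoidal S for S :: "('o, 'm) smc" +
  assumes strong_monad: "strong_monad S"
begin

lemma ma_hom [simp]: "f \<in> hom S X Y \<Longrightarrow> ma S f \<in> hom S (mo S X) (mo S Y)"
  using strong_monad by (simp add: strong_monad_def)

lemma has_cod_ma [simp]: "has_cod f Y \<Longrightarrow> has_cod (ma S f) (mo S Y)"
  unfolding has_cod_def by (meson ma_hom)

lemma has_dom_ma [simp]: "has_dom f X \<Longrightarrow> has_dom (ma S f) (mo S X)"
  unfolding has_dom_def by (meson ma_hom)

lemma ma_idm [simp]: "ma S (idm S X) = idm S (mo S X)"
  using strong_monad by (simp add: strong_monad_def)

lemma ma_cmp: "f \<in> hom S X Y \<Longrightarrow> g \<in> hom S Y Z \<Longrightarrow> ma S (cmp S g f) = cmp S (ma S g) (ma S f)"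
  using strong_monad by (simp add: strong_monad_def)

lemma ma_cmp_at [simp]:
  "has_cod f Y \<Longrightarrow> has_dom g Y \<Longrightarrow> cmp_at (mo S Y) (ma S g) (ma S f) = ma S (cmp_at Y g f)"
  unfolding has_cod_def has_dom_def cmp_at_def by (metis ma_cmp)

lemma ma_cmp_at_assoc [simp]:
  "has_cod k X \<Longrightarrow> ma S f \<in> hom S X (mo S Y) \<Longrightarrow> has_dom g Y \<Longrightarrow> has_cod f Y \<Longrightarrow>
   cmp_at (mo S Y) (ma S g) (cmp_at X (ma S f) k) = cmp_at X (ma S (cmp_at Y g f)) k"
  by (rule cmp_at_assoc_eq) simp_all

lemma eta_hom [simp]: "eta S X \<in> hom S X (mo S X)"
  and mu_hom [simp]: "mu S X \<in> hom S (mo S (mo S X)) (mo S X)"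
  and str_hom [simp]: "str S X Y \<in> hom S (mo S X \<otimes> Y) (mo S (X \<otimes> Y))"
  using strong_monad by (simp_all add: strong_monad_def)

lemmas eta_dom_cod [simp] = hom_has_dom[OF eta_hom] hom_has_cod[OF eta_hom]
lemmas mu_dom_cod [simp] = hom_has_dom[OF mu_hom] hom_has_cod[OF mu_hom]
lemmas str_dom_cod [simp] = hom_has_dom[OF str_hom] hom_has_cod[OF str_hom]

lemma eta_natural:
  "f \<in> hom S X Y \<Longrightarrow> cmp_at (mo S X) (ma S f) (eta S X) = cmp_at Y (eta S Y) f"
  using strong_monad by (simp add: strong_monad_def cmp_at_def)

lemma mu_natural:
  "f \<in> hom S X Y \<Longrightarrow>
   cmp_at (mo S X) (ma S f) (mu S X) = cmp_at (mo S (mo S Y)) (mu S Y) (ma S (ma S f))"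
  using strong_monad by (simp add: strong_monad_def cmp_at_def)

lemma str_natural:
  "f \<in> hom S X X' \<Longrightarrow> g \<in> hom S Y Y' \<Longrightarrow>
   cmp_at (mo S X' \<otimes> Y') (str S X' Y') (ma S f \<odot> g) =
   cmp_at (mo S (X \<otimes> Y)) (ma S (f \<odot> g)) (str S X Y)"
  using strong_monad by (simp add: strong_monad_def cmp_at_def)

lemma str_assoc:
  "cmp_at (mo S X \<otimes> (Y \<otimes> Z)) (str S X (Y \<otimes> Z)) (assoc S (mo S X) Y Z) =
   cmp_at (mo S ((X \<otimes> Y) \<otimes> Z)) (ma S (assoc S X Y Z))
     (cmp_at (mo S (X \<otimes> Y) \<otimes> Z) (str S (X \<otimes> Y) Z) (str S X Y \<odot> idm S Z))"
  using strong_monad by (simp add: strong_monad_def cmp_at_def)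

lemma str_eta: "cmp_at (mo S X \<otimes> Y) (str S X Y) (eta S X \<odot> idm S Y) = eta S (X \<otimes> Y)"
  using strong_monad by (simp add: strong_monad_def cmp_at_def)

lemma str_mu:
  "cmp_at (mo S X \<otimes> Y) (str S X Y) (mu S X \<odot> idm S Y) =
   cmp_at (mo S (mo S (X \<otimes> Y))) (mu S (X \<otimes> Y))
     (cmp_at (mo S (mo S X \<otimes> Y)) (ma S (str S X Y)) (str S (mo S X) Y))"
  using strong_monad by (simp add: strong_monad_def cmp_at_def)

definition endo_act :: "'o \<Rightarrow> 'm \<Rightarrow> 'm" where
  "endo_act B b = Lam S (mo S (End B)) B B
     (cmp_at (mo S B) b (cmp_at (mo S (End B \<otimes> B)) (ma S (app S B B)) (str S (End B) B)))"

lemma Lam_p_endo_eq: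
  "Lam S (mo S (End (mo S A))) (mo S A) (mo S A) (p_endo S A) = endo_act (mo S A) (mu S A)"
  by (simp add: p_endo_def endo_act_def endo_def cmp_at_def)

end

locale EM_algebra_obj = closed_strong_monad S for S :: "('o, 'm) smc" +
  fixes B :: 'o and b :: 'm
  assumes EM_algebra: "EM_algebra S B b"
begin

lemma act_hom [simp]: "b \<in> hom S (mo S B) B"
  using EM_algebra by (simp add: EM_algebra_def)

lemmas act_dom_cod [simp] = hom_has_dom[OF act_hom] hom_has_cod[OF act_hom]

lemma act_unit: "cmp_at (mo S B) b (eta S B) = idm S B"
  using EM_algebra by (simp add: EM_algebra_def cmp_at_def)

lemma act_mu: "cmp_at (mo S B) b (mu S B) = cmp_at (mo S B) b (ma S b)"
  using EM_algebra by (simp add: EM_algebra_def cmp_at_def)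

lemma endo_act_hom [simp]: "endo_act B b \<in> hom S (mo S (End B)) (End B)"
  by (simp add: endo_act_def)

lemma endo_act_unit: "cmp_at (mo S (End B)) (endo_act B b) (eta S (End B)) = idm S (End B)"
  (is "?lhs = _")
proof (rule hom_ex_eqI[where X="End B" and B=B and C=B])
  have eta_ev: "cmp_at (mo S (End B \<otimes> B)) (ma S (app S B B)) (eta S (End B \<otimes> B)) =
      cmp_at B (eta S B) (app S B B)"
    by (rule eta_natural) simp
  show "cmp_at (End B \<otimes> B) (app S B B) (?lhs \<odot> idm S B) =
      cmp_at (End B \<otimes> B) (app S B B) (idm S (End B) \<odot> idm S B)"
    by (simp add: endo_act_def str_eta eta_ev cmp_at_assoc_eq[OF eta_ev]
        cmp_at_assoc_eq[OF act_unit])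
qed simp_all

lemma endo_act_mu:
  "cmp_at (mo S (End B)) (endo_act B b) (ma S (endo_act B b)) =
   cmp_at (mo S (End B)) (endo_act B b) (mu S (End B))"
  (is "?lhs = ?rhs")
proof (rule hom_ex_eqI[where X="mo S (mo S (End B))" and B=B and C=B])
  let ?N = "End B" and ?L = "endo_act B b" and ?ev = "app S B B"
  have str_L: "cmp_at (mo S ?N \<otimes> B) (str S ?N B) (ma S ?L \<odot> idm S B) =
      cmp_at (mo S (mo S ?N \<otimes> B)) (ma S (?L \<odot> idm S B)) (str S (mo S ?N) B)"
    by (rule str_natural) simp_all
  have mu_ev: "cmp_at (mo S (?N \<otimes> B)) (ma S ?ev) (mu S (?N \<otimes> B)) =
      cmp_at (mo S (mo S B)) (mu S B) (ma S (ma S ?ev))"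
    by (rule mu_natural) simp
  show "cmp_at (?N \<otimes> B) ?ev (?lhs \<odot> idm S B) = cmp_at (?N \<otimes> B) ?ev (?rhs \<odot> idm S B)"
    by (simp add: endo_act_def str_L[unfolded endo_act_def] str_mu mu_ev cmp_at_assoc_eq2[OF mu_ev]
        act_mu cmp_at_assoc_eq2[OF act_mu])
qed simp_all

lemma endo_comp_act:
  "cmp_at (End B \<otimes> End B) (endo_comp B) (endo_act B b \<odot> idm S (End B)) =
   cmp_at (mo S (End B)) (endo_act B b)
     (cmp_at (mo S (End B \<otimes> End B)) (ma S (endo_comp B)) (str S (End B) (End B)))"
  (is "?lhs = ?rhs")
proof (rule hom_ex_eqI[where X="mo S (End B) \<otimes> End B" and B=B and C=B])
  let ?N = "End B" and ?L = "endo_act B b" and ?C = "endo_comp B" and ?ev = "app S B B"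
  have assoc_L: "cmp_at ((?N \<otimes> ?N) \<otimes> B) (assoc S ?N ?N B) ((?L \<odot> idm S ?N) \<odot> idm S B) =
      cmp_at (mo S ?N \<otimes> (?N \<otimes> B)) (?L \<odot> idm S (?N \<otimes> B)) (assoc S (mo S ?N) ?N B)"
    using assoc_natural[of ?L "mo S ?N" ?N "idm S ?N" ?N ?N "idm S B" B B] by simp
  have str_ev: "cmp_at (mo S ?N \<otimes> B) (str S ?N B) (idm S (mo S ?N) \<odot> ?ev) =
      cmp_at (mo S (?N \<otimes> (?N \<otimes> B))) (ma S (idm S ?N \<odot> ?ev)) (str S ?N (?N \<otimes> B))"
    using str_natural[of "idm S ?N" ?N ?N ?ev "?N \<otimes> B" B] by simp
  have str_C: "cmp_at (mo S ?N \<otimes> B) (str S ?N B)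
        (cmp_at (mo S (?N \<otimes> ?N)) (ma S ?C) (str S ?N ?N) \<odot> idm S B) =
      cmp_at (mo S ((?N \<otimes> ?N) \<otimes> B)) (ma S (?C \<odot> idm S B))
        (cmp_at (mo S (?N \<otimes> ?N) \<otimes> B) (str S (?N \<otimes> ?N) B) (str S ?N ?N \<odot> idm S B))"
  proof -
    have "cmp_at (mo S ?N \<otimes> B) (str S ?N B) (ma S ?C \<odot> idm S B) =
        cmp_at (mo S ((?N \<otimes> ?N) \<otimes> B)) (ma S (?C \<odot> idm S B)) (str S (?N \<otimes> ?N) B)"
      by (rule str_natural) simp_all
    moreover have "cmp_at (mo S (?N \<otimes> ?N)) (ma S ?C) (str S ?N ?N) \<odot> idm S B =
        cmp_at (mo S (?N \<otimes> ?N) \<otimes> B) (ma S ?C \<odot> idm S B) (str S ?N ?N \<odot> idm S B)"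
      by simp
    ultimately show ?thesis
      by (simp only:) (rule cmp_at_assoc_eq2; simp)
  qed
  show "cmp_at (?N \<otimes> B) ?ev (?lhs \<odot> idm S B) = cmp_at (?N \<otimes> B) ?ev (?rhs \<odot> idm S B)"
    by (simp add: endo_comp_def endo_act_def assoc_L[unfolded endo_act_def endo_comp_def] str_ev
        cmp_at_assoc_eq2[OF str_ev] str_assoc str_C[unfolded endo_comp_def])
qed simp_all

lemma EM_monoid_endo: "EM_monoid S (End B) (endo_act B b) (endo_comp B) (endo_ident B)"
  using monoid_obj_endo endo_act_unit endo_act_mu endo_comp_act
  by (simp add: EM_monoid_def EM_algebra_def cmp_at_def)

end

locale EM_monoid_obj = closed_strong_monad S for S :: "('o, 'm) smc" +
  fixes E :: 'o and a m u :: 'm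
  assumes EM_monoid: "EM_monoid S E a m u"
begin

sublocale EM_algebra_obj S E a
  using EM_monoid by unfold_locales (simp add: EM_monoid_def)

sublocale internal_monoid S E m u
  using EM_monoid by unfold_locales (simp add: EM_monoid_def)

lemma mult_act:
  "cmp_at (E \<otimes> E) m (a \<odot> idm S E) = cmp_at (mo S E) a (cmp_at (mo S (E \<otimes> E)) (ma S m) (str S E E))"
  using EM_monoid by (simp add: EM_monoid_def cmp_at_def)

lemma curry_mult_act:
  "cmp_at E curry_mult a = cmp_at (mo S (End E)) (endo_act E a) (ma S curry_mult)"
  (is "?lhs = ?rhs")
proof (rule hom_ex_eqI[where X="mo S E" and B=E and C=E])
  have str_L: "cmp_at (mo S (End E) \<otimes> E) (str S (End E) E) (ma S curry_mult \<odot> idm S E) =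
      cmp_at (mo S (E \<otimes> E)) (ma S (curry_mult \<odot> idm S E)) (str S E E)"
    by (rule str_natural) simp_all
  show "cmp_at (End E \<otimes> E) (app S E E) (?lhs \<odot> idm S E) =
      cmp_at (End E \<otimes> E) (app S E E) (?rhs \<odot> idm S E)"
    by (simp add: endo_act_def str_L mult_act)
qed simp_all

lemma EM_monoid_hom_curry_mult:
  "EM_monoid_hom S E a m u (End E) (endo_act E a) (endo_comp E) (endo_ident E) curry_mult"
  using EM_monoid EM_monoid_endo curry_mult_act curry_mult_mult curry_mult_unit
  by (simp add: EM_monoid_hom_def cmp_at_def)

end

theorem theorem16:
  fixes S :: "('o, 'm) smc" and A :: 'o and m u :: 'm
  assumes "closed_monoidal_category S"
    and "strong_monad S"
    and "EM_monoid S (mo S A) (mu S A) m u"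
  shows "EM_monoid_hom S (mo S A) (mu S A) m u
           (endo S A) (Lam S (mo S (endo S A)) (mo S A) (mo S A) (p_endo S A))
           (comp_endo S A) (ident_endo S A)
           (Lam S (mo S A) (mo S A) (mo S A) m)
       \<and> (\<exists>r \<in> hom S (endo S A) (mo S A).
            cmp S r (Lam S (mo S A) (mo S A) (mo S A) m) = idm S (mo S A))"
proof -
  interpret EM_monoid_obj S "mo S A" "mu S A" m u
    using assms by unfold_locales
  show ?thesis
    using EM_monoid_hom_curry_mult curry_mult_split_mono
    by (simp add: endo_def comp_endo_eq ident_endo_eq Lam_p_endo_eq)
qed

end
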